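(* Let $X$ be a CLP-compact (Hausdorff) space with a dense discrete subspace $Y$, and let $Z\subset X$ be a set with $Z\setminus Y$ finite. Then the closure $\overline{Z}$ of $Z$ in $X$ is countably compact at $Z$. Moreover, if $\overline{Z}\setminus Z$ is compact, then $\overline{Z}$ is compact.
   Context: A space is CLP-compact if every cover by clopen sets has a finite subcover. A space $W$ is countably compact at a subset $A\subset W$ if every infinite subset $B\subset A$ has an accumulation point in $W$. *)

theory Defs
  imports "HOL-Analysis.Analysis"
begin

definition CLP_compact :: "'a topology \<Rightarrow> bool" where
  "CLP_compact X \<longleftrightarrow>
     (\<forall>\<U>. (\<forall>U\<in>\<U>. openin X U \<and> closedin X U) \<and> topspace X \<subseteq> \<Union>\<U> \<longrightarrow>
          (\<exists>\<F>. finite \<F> \<and> \<F> \<subseteq> \<U> \<and> topspace X \<subseteq> \<Union>\<F>))"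

definition discrete_subspace :: "'a topology \<Rightarrow> 'a set \<Rightarrow> bool" where
  "discrete_subspace X Y \<longleftrightarrow> Y \<subseteq> topspace X \<and> (\<forall>y\<in>Y. openin (subtopology X Y) {y})"

definition countably_compact_at :: "'a topology \<Rightarrow> 'a set \<Rightarrow> bool" where
  "countably_compact_at W A \<longleftrightarrow>
     (\<forall>B. B \<subseteq> A \<and> infinite B \<longrightarrow> W derived_set_of B \<noteq> {})"

end

theory Submission
  imports Defs
begin

text \<open>Points of a dense discrete subspace are isolated, so a closed set of them is a clopen set
  covered by clopen singletons and, by CLP-compactness, finite. Hence an infinite subset of \<open>Z\<close>,
  which meets \<open>Y\<close> in an infinite set, cannot be closed discrete: it has an accumulation point,
  necessarily in the closure of \<open>Z\<close>. For compactness, cover the compact remainder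
  \<open>closure Z - Z\<close> by finitely many members of an open cover; what is left of the closure is a
  closed set meeting the complement of \<open>Y\<close> in finitely many points, and such sets are compact: after
  covering those finitely many points, the rest is a closed subset of \<open>Y\<close>, hence finite.\<close>

lemma compactin_if_compact_remainders:
  assumes "compactin X K" "K \<subseteq> E" "E \<subseteq> topspace X"
    and "\<And>W. openin X W \<Longrightarrow> K \<subseteq> W \<Longrightarrow> compactin X (E - W)"
  shows "compactin X E"
  unfolding compactin_def
proof (intro conjI allI impI)
  show "E \<subseteq> topspace X" by fact
  fix \<U> assume \<U>: "(\<forall>U\<in>\<U>. openin X U) \<and> E \<subseteq> \<Union>\<U>"
  then obtain \<F> where \<F>: "finite \<F>" "\<F> \<subseteq> \<U>" "K \<subseteq> \<Union>\<F>"
    using assms(1,2) unfolding compactin_def by (metis subset_trans)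
  have "compactin X (E - \<Union>\<F>)"
    using \<F> \<U> by (intro assms(4)) auto
  then obtain \<G> where \<G>: "finite \<G>" "\<G> \<subseteq> \<U>" "E - \<Union>\<F> \<subseteq> \<Union>\<G>"
    using \<U> unfolding compactin_def by (metis Diff_subset subset_trans)
  show "\<exists>\<F>. finite \<F> \<and> \<F> \<subseteq> \<U> \<and> E \<subseteq> \<Union>\<F>"
    using \<F> \<G> by (intro exI[of _ "\<F> \<union> \<G>"]) auto
qed

lemma openin_singleton_of_dense_discrete:
  assumes "t1_space X" "X closure_of Y = topspace X" "openin (subtopology X Y) {y}"
  shows "openin X {y}"
proof -
  obtain U where U: "openin X U" "{y} = U \<inter> Y"
    using assms(3) unfolding openin_subtopology by blast
  have "openin X (U - {y})"
    using assms(1) U(1) by (simp add: t1_space_openin_delete_alt)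
  moreover have "Y \<inter> (U - {y}) = {}"
    using U(2) by blast
  ultimately have "U = {y}"
    using assms(2) U(2) unfolding dense_intersects_open by blast
  then show ?thesis
    using U(1) by simp
qed

lemma CLP_compact_closed_isolated_finite:
  assumes "t1_space X" "CLP_compact X" "closedin X E" "\<And>e. e \<in> E \<Longrightarrow> openin X {e}"
  shows "finite E"
proof -
  define \<U> where "\<U> = insert (topspace X - E) ((\<lambda>e. {e}) ` E)"
  have "openin X E"
    using assms(4) openin_Union[of "(\<lambda>e. {e}) ` E" X] by auto
  then have "openin X (topspace X - E) \<and> closedin X (topspace X - E)"
    using assms(3) closedin_diff[OF closedin_topspace] unfolding closedin_def by blast
  moreover have "openin X {e} \<and> closedin X {e}" if "e \<in> E" for e
    using that assms(4) closedin_t1_singleton[OF assms(1)] closedin_subset[OF assms(3)] by blast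
  ultimately have "\<forall>U\<in>\<U>. openin X U \<and> closedin X U"
    unfolding \<U>_def by blast
  moreover have "topspace X \<subseteq> \<Union>\<U>"
    unfolding \<U>_def by blast
  ultimately obtain \<F> where \<F>: "finite \<F>" "\<F> \<subseteq> \<U>" "topspace X \<subseteq> \<Union>\<F>"
    using CLP_compact_def[THEN iffD1, OF assms(2), rule_format, of \<U>] by blast
  have "E \<subseteq> \<Union>(\<F> - {topspace X - E})"
    using \<F>(3) closedin_subset[OF assms(3)] by blast
  moreover have "finite (\<Union>(\<F> - {topspace X - E}))"
    using \<F>(1,2) unfolding \<U>_def by (intro finite_Union) auto
  ultimately show ?thesis
    by (rule finite_subset)
qed

context
  fixes X :: "'a topology" and Y :: "'a set"
  assumes T1: "t1_space X"
    and CLP: "CLP_compact X"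
    and discrete: "discrete_subspace X Y"
    and dense: "X closure_of Y = topspace X"
begin

lemma closedin_subset_discrete_finite:
  assumes "closedin X E" "E \<subseteq> Y"
  shows "finite E"
  using CLP_compact_closed_isolated_finite[OF T1 CLP assms(1)]
    openin_singleton_of_dense_discrete[OF T1 dense]
    discrete assms(2) unfolding discrete_subspace_def by blast

lemma derived_set_of_nonempty_finite_diff:
  assumes "B \<subseteq> topspace X" "infinite B" "finite (B - Y)"
  shows "X derived_set_of B \<noteq> {}"
proof
  assume "X derived_set_of B = {}"
  then have "closedin X (B \<inter> Y)"
    using assms(1) derived_set_of_mono[of "B \<inter> Y" B X]
    by (auto simp: closedin_contains_derived_set)
  then have "finite (B \<inter> Y)"
    by (rule closedin_subset_discrete_finite) blast
  then show False
    using assms(2,3) by (metis Int_Diff_Un finite_UnI)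
qed

lemma compactin_closed_finite_diff:
  assumes "closedin X E" "finite (E - Y)"
  shows "compactin X E"
proof (rule compactin_if_compact_remainders)
  show "compactin X (E - Y)"
    using assms closedin_subset by (blast intro: finite_imp_compactin)
  show "E \<subseteq> topspace X"
    using assms(1) closedin_subset by blast
  fix W assume "openin X W" "E - Y \<subseteq> W"
  then have "finite (E - W)"
    using assms(1) by (intro closedin_subset_discrete_finite) (auto intro: closedin_diff)
  then show "compactin X (E - W)"
    using \<open>E \<subseteq> topspace X\<close> by (blast intro: finite_imp_compactin)
qed auto

end

lemma countably_compact_at_closure_ofI:
  assumes "Z \<subseteq> topspace X" "\<And>B. B \<subseteq> Z \<Longrightarrow> infinite B \<Longrightarrow> X derived_set_of B \<noteq> {}"
  shows "countably_compact_at (subtopology X (X closure_of Z)) Z"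
  unfolding countably_compact_at_def
proof (intro allI impI, elim conjE)
  fix B assume B: "B \<subseteq> Z" "infinite B"
  have "X derived_set_of B \<subseteq> X closure_of Z"
    by (meson B(1) closure_of_mono derived_set_of_subset_closure_of order_trans)
  moreover have "X closure_of Z \<inter> B = B"
    using B closure_of_subset[OF assms(1)] by blast
  ultimately show "subtopology X (X closure_of Z) derived_set_of B \<noteq> {}"
    using assms(2) B by (simp add: derived_set_of_subtopology Int_absorb1)
qed

theorem lemma2p1:
  fixes X :: "'a topology" and Y Z :: "'a set"
  assumes "Hausdorff_space X"
    and "CLP_compact X"
    and "discrete_subspace X Y"
    and "X closure_of Y = topspace X"
    and "Z \<subseteq> topspace X"
    and "finite (Z - Y)"
  shows "countably_compact_at (subtopology X (X closure_of Z)) Z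
         \<and> (compactin X (X closure_of Z - Z) \<longrightarrow> compactin X (X closure_of Z))"
proof -
  have T1: "t1_space X"
    using assms(1) by (rule Hausdorff_imp_t1_space)
  have "countably_compact_at (subtopology X (X closure_of Z)) Z"
  proof (rule countably_compact_at_closure_ofI[OF assms(5)])
    fix B assume "B \<subseteq> Z" "infinite B"
    moreover have "finite (B - Y)"
      using \<open>B \<subseteq> Z\<close> assms(6) by (meson Diff_mono finite_subset order_refl)
    ultimately show "X derived_set_of B \<noteq> {}"
      using assms(5) by (intro derived_set_of_nonempty_finite_diff[OF T1 assms(2-4)]) auto
  qed
  moreover have "compactin X (X closure_of Z)" if "compactin X (X closure_of Z - Z)"
    using that
  proof (rule compactin_if_compact_remainders)
    fix W assume "openin X W" "X closure_of Z - Z \<subseteq> W"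
    then have "X closure_of Z - W - Y \<subseteq> Z - Y"
      by blast
    then have "finite (X closure_of Z - W - Y)"
      using assms(6) by (rule finite_subset)
    then show "compactin X (X closure_of Z - W)"
      using \<open>openin X W\<close>
      by (intro compactin_closed_finite_diff[OF T1 assms(2-4)] closedin_diff closedin_closure_of)
  qed (simp_all add: closure_of_subset_topspace)
  ultimately show ?thesis
    by blast
qed

end
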